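(* Let $V(x,y)=V_0(x)I_2$ with $V_0$ real-valued, integrable and compactly supported, and $\hat V_0(\xi)=\int V_0(x)e^{-i\xi x}dx$. For $E\in\mathbb R$ and $m=(n,\epsilon_m),p=(q,\epsilon_p)\in M(E)$: (i) if $n\ne q$ then $\hat S^{\mathrm{lin}}_{m,p}(E)=0$; (ii) $\hat S^{\mathrm{lin}}_{m,m}(E)=\frac{iE}{\sqrt{E^2-2n}}\hat V_0(0)$; (iii) if $n=q\ge1$, $E>\sqrt{2n}$ and $\epsilon_m\ne\epsilon_p$, then $\int\overline{\phi_m(y;E)}^T\phi_p(y;E)dy=\sqrt{2n}/E\ne0$ and $\xi_m(E)-\xi_p(E)=\pm2\sqrt{E^2-2n}$, so $\hat S^{\mathrm{lin}}_{n+,n-}(E)=\frac{i\sqrt{2n}}{\sqrt{E^2-2n}}\hat V_0(2\sqrt{E^2-2n})$ and $\hat S^{\mathrm{lin}}_{n-,n+}(E)=\frac{i\sqrt{2n}}{\sqrt{E^2-2n}}\hat V_0(-2\sqrt{E^2-2n})$. Consequently, the transmission data $\{\hat S^{\mathrm{lin}}_{m,m}(E)\}$ determine only $\hat V_0(0)=\int V_0$, while the reflection data $\{\hat S^{\mathrm{lin}}_{n\pm,n\mp}(E):E>\sqrt{2n}\}$ for any fixed $n\ge1$ determine $\hat V_0(\xi)$ for every $\xi\neq0$.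
   Context: Hermite functions $\varphi_n(y)=(2^nn!\sqrt\pi)^{-1/2}H_n(y)e^{-y^2/2}$. Modes: $M=\{(n,\pm1):n\ge1\}\cup\{(0,-1)\}$, written $n\pm$; $M(E)=\{(n,\epsilon)\in M:E^2>2n\}$. For $m=(n,\epsilon_m)$, $n\ge1$: $\xi_m(E)=\epsilon_m\sqrt{E^2-2n}$, $\phi_m(y;E)=c_m(\sqrt{2n}\varphi_{n-1},(E-\xi_m)\varphi_n)^T$, $c_m=(2n+|E-\xi_m|^2)^{-1/2}$; for $m=(0,-1)$: $\xi_m=-E$, $\phi_m=(0,\varphi_0)^T$. Linearized scattering coefficients of a bounded compactly supported Hermitian $V$: $\hat S^{\mathrm{lin}}_{m,p}(E)=\frac{iE}{\sqrt{E^2-2q}}\iint e^{-i(\xi_m(E)-\xi_p(E))x}\overline{\phi_m(y;E)}^TV(x,y)\phi_p(y;E)\,dy\,dx$ for $p=(q,\epsilon_p)$. *)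

theory Defs
  imports "HOL-Analysis.Analysis"
begin

fun hermite_poly :: "nat \<Rightarrow> real \<Rightarrow> real" where
  "hermite_poly 0 y = 1"
| "hermite_poly (Suc 0) y = 2 * y"
| "hermite_poly (Suc (Suc n)) y = 2 * y * hermite_poly (Suc n) y - 2 * real (Suc n) * hermite_poly n y"

definition hermite_fun :: "nat \<Rightarrow> real \<Rightarrow> real" where
  "hermite_fun n y = (2 ^ n * fact n * sqrt pi) powr (-1/2) * hermite_poly n y * exp (- (y\<^sup>2) / 2)"

type_synonym mode = "nat \<times> int"

definition modes :: "mode set" where
  "modes = {(n, e). n \<ge> 1 \<and> (e = 1 \<or> e = -1)} \<union> {(0, -1)}"

definition modes_E :: "real \<Rightarrow> mode set" where
  "modes_E E = {m \<in> modes. E\<^sup>2 > 2 * real (fst m)}"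

definition xi :: "mode \<Rightarrow> real \<Rightarrow> real" where
  "xi m E = (if fst m = 0 then - E else real_of_int (snd m) * sqrt (E\<^sup>2 - 2 * real (fst m)))"

definition vec2 :: "complex \<Rightarrow> complex \<Rightarrow> complex ^ 2" where
  "vec2 a b = (\<chi> i. if i = 1 then a else b)"

definition phi :: "mode \<Rightarrow> real \<Rightarrow> real \<Rightarrow> complex ^ 2" where
  "phi m E y =
     (if fst m = 0 then vec2 0 (complex_of_real (hermite_fun 0 y))
      else (let n = fst m; c = (2 * real n + \<bar>E - xi m E\<bar>\<^sup>2) powr (-1/2) in
            vec2 (complex_of_real (c * sqrt (2 * real n) * hermite_fun (n - 1) y))
                 (complex_of_real (c * (E - xi m E) * hermite_fun n y))))"

definition cdot2 :: "complex ^ 2 \<Rightarrow> complex ^ 2 \<Rightarrow> complex" where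
  "cdot2 u w = (\<Sum>i\<in>UNIV. cnj (u $ i) * w $ i)"

definition S_lin :: "(real \<Rightarrow> real \<Rightarrow> complex ^ 2 ^ 2) \<Rightarrow> real \<Rightarrow> mode \<Rightarrow> mode \<Rightarrow> complex" where
  "S_lin V E m p =
     \<i> * complex_of_real E / complex_of_real (sqrt (E\<^sup>2 - 2 * real (fst p))) *
     (LINT x|lborel. LINT y|lborel.
        exp (- \<i> * complex_of_real ((xi m E - xi p E) * x)) * cdot2 (phi m E y) (V x y *v phi p E y))"

definition scalar_pot :: "(real \<Rightarrow> real) \<Rightarrow> real \<Rightarrow> real \<Rightarrow> complex ^ 2 ^ 2" where
  "scalar_pot V0 x y = mat (complex_of_real (V0 x))"

definition fourier :: "(real \<Rightarrow> real) \<Rightarrow> real \<Rightarrow> complex" where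
  "fourier V0 \<xi> = (LINT x|lborel. complex_of_real (V0 x) * exp (- \<i> * complex_of_real (\<xi> * x)))"

definition admissible :: "(real \<Rightarrow> real) \<Rightarrow> bool" where
  "admissible V0 \<longleftrightarrow> integrable lborel V0 \<and> (\<exists>R. \<forall>x. \<bar>x\<bar> > R \<longrightarrow> V0 x = 0)"

end

theory Submission
  imports Defs "HOL-Probability.Distributions" "HOL-Real_Asymp.Real_Asymp"
    "HOL-Computational_Algebra.Polynomial"
begin

text \<open>For the potential \<open>V\<^sub>0(x) I\<^sub>2\<close> the double integral separates, and every linearized
  coefficient factorizes as \<open>iE / sqrt (E\<^sup>2 - 2q)\<close> times the Fourier transform of \<open>V\<^sub>0\<close> at
  \<open>\<xi>\<^sub>m - \<xi>\<^sub>p\<close> times the \<open>L\<^sup>2(dy)\<close> overlap of \<open>\<phi>\<^sub>m\<close> and \<open>\<phi>\<^sub>p\<close>. Orthonormality of the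
  Hermite functions evaluates the overlap: it is \<open>0\<close> between different levels, \<open>1\<close> on the
  diagonal, and \<open>sqrt (2n) / E\<close> between the two branches \<open>n\<plusminus>\<close> of one level, whose
  frequencies differ by \<open>\<plusminus>2 sqrt (E\<^sup>2 - 2n)\<close>. As \<open>E\<close> runs over \<open>(sqrt (2n), \<infinity>)\<close> these
  differences cover every nonzero frequency.\<close>

lemma hermite_poly_Suc:
  "hermite_poly (Suc n) y = 2 * y * hermite_poly n y - 2 * real n * hermite_poly (n - 1) y"
  by (cases n) auto

lemma hermite_poly_has_real_derivative:
  "(hermite_poly n has_real_derivative 2 * real n * hermite_poly (n - 1) y) (at y)"
proof (induction n y rule: hermite_poly.induct)
  case (3 n y)
  have "((\<lambda>y. 2 * y * hermite_poly (Suc n) y - 2 * real (Suc n) * hermite_poly n y)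
          has_real_derivative
        2 * hermite_poly (Suc n) y + 2 * y * (2 * real (Suc n) * hermite_poly n y)
          - 2 * real (Suc n) * (2 * real n * hermite_poly (n - 1) y)) (at y)"
    using 3 by (auto intro!: derivative_eq_intros)
  also have "2 * hermite_poly (Suc n) y + 2 * y * (2 * real (Suc n) * hermite_poly n y)
          - 2 * real (Suc n) * (2 * real n * hermite_poly (n - 1) y)
        = 2 * real (Suc (Suc n)) * hermite_poly (Suc n) y"
    unfolding hermite_poly_Suc[of n] by (simp add: algebra_simps)
  finally show ?case by simp
qed (auto intro!: derivative_eq_intros)

lemma isCont_hermite_poly [continuous_intros]: "isCont (hermite_poly n) y"
  using hermite_poly_has_real_derivative DERIV_isCont by blast

lemma hermite_poly_eq_poly: "\<exists>p. hermite_poly n = poly p"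
proof (induction n rule: less_induct)
  case (less n)
  consider "n = 0" | "n = 1" | m where "n = Suc (Suc m)"
    by (metis One_nat_def not0_implies_Suc)
  then show ?case
  proof cases
    case 1
    then show ?thesis by (intro exI[of _ "[:1:]"]) auto
  next
    case 2
    then show ?thesis by (intro exI[of _ "[:0, 2:]"]) auto
  next
    case 3
    obtain p q where "hermite_poly m = poly p" "hermite_poly (Suc m) = poly q"
      using less 3 by (metis less_Suc_eq)
    then show ?thesis
      using 3 by (intro exI[of _ "[:0, 2:] * q - smult (2 * real (Suc m)) p"]) auto
  qed
qed

lemma integrable_monomial_gaussian: "integrable lborel (\<lambda>y::real. y ^ k * exp (- y\<^sup>2))"
proof -
  have "integrable lborel (\<lambda>y. sqrt pi * (normal_density 0 (sqrt (1/2)) y * (y - 0) ^ k))"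
    by (intro integrable_mult_right integrable_normal_moment) simp
  also have "(\<lambda>y. sqrt pi * (normal_density 0 (sqrt (1/2)) y * (y - 0) ^ k))
           = (\<lambda>y. y ^ k * exp (- y\<^sup>2))"
    by (simp add: fun_eq_iff normal_density_def power2_eq_square)
  finally show ?thesis .
qed

lemma integrable_poly_gaussian:
  fixes p :: "real poly"
  shows "integrable lborel (\<lambda>y. poly p y * exp (- y\<^sup>2))"
  unfolding poly_altdef sum_distrib_right mult.assoc
  by (intro Bochner_Integration.integrable_sum integrable_mult_right integrable_monomial_gaussian)

lemma poly_gaussian_tendsto_0:
  fixes p :: "real poly"
  shows "((\<lambda>y. poly p y * exp (- y\<^sup>2)) \<longlongrightarrow> 0) at_top"
    and "((\<lambda>y. poly p y * exp (- y\<^sup>2)) \<longlongrightarrow> 0) at_bot"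
proof -
  have monomial: "((\<lambda>y::real. y ^ k * exp (- y\<^sup>2)) \<longlongrightarrow> 0) at_top"
                 "((\<lambda>y::real. y ^ k * exp (- y\<^sup>2)) \<longlongrightarrow> 0) at_bot" for k
    by real_asymp+
  then show "((\<lambda>y. poly p y * exp (- y\<^sup>2)) \<longlongrightarrow> 0) at_top"
            "((\<lambda>y. poly p y * exp (- y\<^sup>2)) \<longlongrightarrow> 0) at_bot"
    unfolding poly_altdef sum_distrib_right mult.assoc
    by (intro tendsto_null_sum tendsto_mult_right_zero monomial)+
qed

lemma hermite_poly_mult_eq_poly: "\<exists>r. \<forall>y. hermite_poly j y * hermite_poly k y = poly r y"
proof -
  obtain p q where "hermite_poly j = poly p" "hermite_poly k = poly q"
    using hermite_poly_eq_poly by metis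
  then show ?thesis by (intro exI[of _ "p * q"]) simp
qed

lemma integrable_hermite_gaussian:
  "integrable lborel (\<lambda>y. hermite_poly j y * hermite_poly k y * exp (- y\<^sup>2))"
  using hermite_poly_mult_eq_poly[of j k] integrable_poly_gaussian by auto

lemma hermite_gaussian_tendsto_0:
  "((\<lambda>y. hermite_poly j y * hermite_poly k y * exp (- y\<^sup>2)) \<longlongrightarrow> 0) at_top"
  "((\<lambda>y. hermite_poly j y * hermite_poly k y * exp (- y\<^sup>2)) \<longlongrightarrow> 0) at_bot"
  using hermite_poly_mult_eq_poly[of j k] poly_gaussian_tendsto_0 by auto

lemma integral_deriv_eq_0_if_vanishing_at_infinity:
  fixes F f :: "real \<Rightarrow> real"
  assumes "\<And>x. (F has_real_derivative f x) (at x)" and "\<And>x. isCont f x"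
    and "integrable lborel f" and "(F \<longlongrightarrow> 0) at_top" and "(F \<longlongrightarrow> 0) at_bot"
  shows "integral\<^sup>L lborel f = 0"
proof -
  have "(LBINT x=-\<infinity>..\<infinity>. f x) = 0 - 0"
  proof (rule interval_integral_FTC_integrable[where F = F])
    show "(F has_vector_derivative f x) (at x)" for x
      using assms(1) has_real_derivative_iff_has_vector_derivative by blast
    show "set_integrable lborel (einterval (-\<infinity>) \<infinity>) f"
      using assms(3) by (simp add: set_integrable_def)
    show "((F \<circ> real_of_ereal) \<longlongrightarrow> 0) (at_right (-\<infinity>))"
      unfolding at_right_MInf filterlim_filtermap using assms(5) by (simp add: o_def)
    show "((F \<circ> real_of_ereal) \<longlongrightarrow> 0) (at_left \<infinity>)"
      unfolding at_left_PInf filterlim_filtermap using assms(4) by (simp add: o_def)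
  qed (use assms(2) in auto)
  then show ?thesis by (simp add: interval_lebesgue_integral_def set_lebesgue_integral_def)
qed

lemma hermite_gaussian_has_real_derivative:
  "((\<lambda>y. hermite_poly k y * exp (- y\<^sup>2))
      has_real_derivative - hermite_poly (Suc k) y * exp (- y\<^sup>2)) (at y)"
proof -
  have "((\<lambda>y. hermite_poly k y * exp (- y\<^sup>2)) has_real_derivative
          2 * real k * hermite_poly (k - 1) y * exp (- y\<^sup>2)
          + hermite_poly k y * (exp (- y\<^sup>2) * - (2 * y))) (at y)"
    by (auto intro!: derivative_eq_intros hermite_poly_has_real_derivative)
  then show ?thesis
    unfolding hermite_poly_Suc by (simp add: algebra_simps)
qed

definition hermite_inner :: "nat \<Rightarrow> nat \<Rightarrow> real" where
  "hermite_inner j k = (LINT y|lborel. hermite_poly j y * hermite_poly k y * exp (- y\<^sup>2))"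

lemma hermite_inner_commute: "hermite_inner j k = hermite_inner k j"
  unfolding hermite_inner_def by (simp add: mult_ac)

text \<open>Integration by parts, moving the derivative off \<open>H\<^sub>k e\<^sup>-\<^sup>y\<^sup>2\<close> (whose derivative is
  \<open>-H\<^sub>k\<^sub>+\<^sub>1 e\<^sup>-\<^sup>y\<^sup>2\<close>) onto \<open>H\<^sub>j\<close>.\<close>
lemma hermite_inner_Suc: "hermite_inner j (Suc k) = 2 * real j * hermite_inner (j - 1) k"
proof -
  let ?G = "\<lambda>j k y. hermite_poly j y * hermite_poly k y * exp (- y\<^sup>2)"
  let ?f = "\<lambda>y. 2 * real j * ?G (j - 1) k y - ?G j (Suc k) y"
  have "integral\<^sup>L lborel ?f = 0"
  proof (rule integral_deriv_eq_0_if_vanishing_at_infinity[where F = "?G j k"])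
    show "(?G j k has_real_derivative ?f y) (at y)" for y
    proof -
      have "((\<lambda>y. hermite_poly j y * (hermite_poly k y * exp (- y\<^sup>2))) has_real_derivative ?f y) (at y)"
        using DERIV_mult[OF hermite_poly_has_real_derivative[of j y]
            hermite_gaussian_has_real_derivative[of k y]]
        by (simp add: algebra_simps)
      then show ?thesis by (simp add: mult.assoc)
    qed
    show "integrable lborel ?f"
      by (intro Bochner_Integration.integrable_diff integrable_mult_right
          integrable_hermite_gaussian)
  qed (intro continuous_intros hermite_gaussian_tendsto_0)+
  moreover have "integral\<^sup>L lborel ?f = 2 * real j * hermite_inner (j - 1) k - hermite_inner j (Suc k)"
    unfolding hermite_inner_def
    by (simp add: integrable_hermite_gaussian)
  ultimately show ?thesis by simp
qed

lemma integral_gaussian: "(LINT y|lborel. exp (- y\<^sup>2)) = sqrt pi"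
proof -
  have "has_bochner_integral lborel (\<lambda>y. exp (- y\<^sup>2)) (2 *\<^sub>R (sqrt pi / 2))"
    by (rule has_bochner_integral_even_function[OF gaussian_moment_0]) simp
  then show ?thesis by (simp add: has_bochner_integral_integral_eq)
qed

lemma hermite_inner_eq: "hermite_inner j k = (if j = k then 2 ^ k * fact k * sqrt pi else 0)"
proof (induction k arbitrary: j)
  case 0
  then show ?case
    using hermite_inner_Suc[of 0] hermite_inner_commute[of _ 0] integral_gaussian
    by (cases j) (simp_all add: hermite_inner_def)
next
  case (Suc k)
  then show ?case
    using hermite_inner_Suc[of j k] by (cases j) simp_all
qed

lemma powr_minus_half_mult_self: "0 < (c::real) \<Longrightarrow> c powr (-1/2) * c powr (-1/2) * c = 1"
  by (simp flip: powr_add add: powr_minus field_simps)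

lemma hermite_fun_mult:
  "hermite_fun j y * hermite_fun k y
     = (2 ^ j * fact j * sqrt pi) powr (-1/2) * (2 ^ k * fact k * sqrt pi) powr (-1/2)
       * (hermite_poly j y * hermite_poly k y * exp (- y\<^sup>2))"
proof -
  have "exp (- y\<^sup>2 / 2) * exp (- y\<^sup>2 / 2) = exp (- y\<^sup>2)"
    by (simp flip: exp_add)
  moreover have "hermite_fun j y * hermite_fun k y
     = (2 ^ j * fact j * sqrt pi) powr (-1/2) * (2 ^ k * fact k * sqrt pi) powr (-1/2)
       * (hermite_poly j y * hermite_poly k y * (exp (- y\<^sup>2 / 2) * exp (- y\<^sup>2 / 2)))"
    unfolding hermite_fun_def by (simp only: mult_ac)
  ultimately show ?thesis by simp
qed

lemma integrable_hermite_fun_mult: "integrable lborel (\<lambda>y. hermite_fun j y * hermite_fun k y)"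
  unfolding hermite_fun_mult by (intro integrable_mult_right integrable_hermite_gaussian)

lemma integral_hermite_fun_mult:
  "(LINT y|lborel. hermite_fun j y * hermite_fun k y) = (if j = k then 1 else 0)"
  unfolding hermite_fun_mult integral_mult_right_zero hermite_inner_def[symmetric] hermite_inner_eq
  using powr_minus_half_mult_self[of "2 ^ k * fact k * sqrt pi"] by simp

definition phi_upper :: "mode \<Rightarrow> real \<Rightarrow> real" where
  "phi_upper m E = (if fst m = 0 then 0
     else (2 * real (fst m) + \<bar>E - xi m E\<bar>\<^sup>2) powr (-1/2) * sqrt (2 * real (fst m)))"

definition phi_lower :: "mode \<Rightarrow> real \<Rightarrow> real" where
  "phi_lower m E = (if fst m = 0 then 1
     else (2 * real (fst m) + \<bar>E - xi m E\<bar>\<^sup>2) powr (-1/2) * (E - xi m E))"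

text \<open>For the mode \<open>(0, -1)\<close> the index \<open>fst m - 1\<close> truncates to \<open>0\<close>, which is harmless
  because the upper coefficient vanishes.\<close>
lemma phi_eq:
  "phi m E y = vec2 (of_real (phi_upper m E * hermite_fun (fst m - 1) y))
                    (of_real (phi_lower m E * hermite_fun (fst m) y))"
  unfolding phi_def phi_upper_def phi_lower_def Let_def by (simp add: mult_ac)

lemma cdot2_vec2: "cdot2 (vec2 a b) (vec2 c d) = cnj a * c + cnj b * d"
  unfolding cdot2_def vec2_def sum_2 by simp

lemma cdot2_mat_scalar: "cdot2 u (mat c *v w) = c * cdot2 u w"
  unfolding cdot2_def matrix_vector_mult_def mat_def sum_2 by (simp add: algebra_simps)

definition phi_overlap :: "mode \<Rightarrow> mode \<Rightarrow> real \<Rightarrow> complex" where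
  "phi_overlap m p E = (LINT y|lborel. cdot2 (phi m E y) (phi p E y))"

lemma phi_overlap_eq:
  "phi_overlap m p E = of_real
     (phi_upper m E * phi_upper p E * (if fst m - 1 = fst p - 1 then 1 else 0)
      + phi_lower m E * phi_lower p E * (if fst m = fst p then 1 else 0))"
proof -
  let ?a = "phi_upper m E * phi_upper p E" and ?b = "phi_lower m E * phi_lower p E"
  let ?h = "\<lambda>i j y. hermite_fun i y * hermite_fun j y"
  have "phi_overlap m p E
      = of_real (LINT y|lborel. ?a * ?h (fst m - 1) (fst p - 1) y + ?b * ?h (fst m) (fst p) y)"
    unfolding phi_overlap_def phi_eq cdot2_vec2
    by (simp add: integral_complex_of_real[symmetric] mult_ac)
  also have "\<dots> = of_real (?a * (LINT y|lborel. ?h (fst m - 1) (fst p - 1) y)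
                          + ?b * (LINT y|lborel. ?h (fst m) (fst p) y))"
    by (simp add: integrable_hermite_fun_mult)
  finally show ?thesis by (simp only: integral_hermite_fun_mult)
qed

lemma phi_overlap_eq_0: "fst m \<noteq> fst p \<Longrightarrow> phi_overlap m p E = 0"
  unfolding phi_overlap_eq phi_upper_def by auto

lemma phi_overlap_self: "phi_overlap m m E = 1"
proof (cases "fst m = 0")
  case False
  let ?s = "2 * real (fst m) + \<bar>E - xi m E\<bar>\<^sup>2"
  have "phi_upper m E * phi_upper m E + phi_lower m E * phi_lower m E
      = ?s powr (-1/2) * ?s powr (-1/2) * ?s"
    using False unfolding phi_upper_def phi_lower_def by (simp add: algebra_simps power2_eq_square)
  also have "\<dots> = 1"
    using False by (intro powr_minus_half_mult_self) (simp add: add_pos_nonneg)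
  finally show ?thesis unfolding phi_overlap_eq by simp
qed (simp add: phi_overlap_eq phi_upper_def phi_lower_def)

lemma powr_minus_half: "0 < x \<Longrightarrow> x powr (-1/2) = 1 / sqrt x"
  by (simp add: powr_minus_divide powr_half_sqrt[symmetric] powr_minus)

lemma powr_minus_half_overlap_identity:
  fixes a b :: real
  assumes "a > 0" and "b > 0"
  shows "(a * b + a\<^sup>2) powr (-1/2) * (a * b + b\<^sup>2) powr (-1/2) * (a * b + a * b)
           = 2 * sqrt (a * b) / (a + b)"
proof -
  have "a * b + a\<^sup>2 = a * (a + b)" and "a * b + b\<^sup>2 = b * (a + b)"
    by (simp_all add: algebra_simps power2_eq_square)
  moreover have "(a * (a + b)) powr (-1/2) * (b * (a + b)) powr (-1/2)
      = 1 / (sqrt (a * (a + b)) * sqrt (b * (a + b)))"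
    using assms powr_minus_half[of "a * (a + b)"] powr_minus_half[of "b * (a + b)"] by simp
  moreover have "sqrt (a * (a + b)) * sqrt (b * (a + b)) = sqrt ((a * b) * (a + b)\<^sup>2)"
    by (simp add: real_sqrt_mult[symmetric] power2_eq_square mult_ac)
  then have "sqrt (a * (a + b)) * sqrt (b * (a + b)) = sqrt (a * b) * (a + b)"
    using assms by (simp only: real_sqrt_mult real_sqrt_abs)
  ultimately have "(a * b + a\<^sup>2) powr (-1/2) * (a * b + b\<^sup>2) powr (-1/2) * (a * b + a * b)
      = 2 * (a * b) / (sqrt (a * b) * (a + b))"
    by simp
  also have "\<dots> = 2 * (a * b / sqrt (a * b)) / (a + b)"
    by (simp only: times_divide_eq_right divide_divide_eq_left)
  also have "\<dots> = 2 * sqrt (a * b) / (a + b)"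
    using assms by (simp add: real_div_sqrt)
  finally show ?thesis .
qed

lemma xi_branch: "n \<ge> 1 \<Longrightarrow> xi (n, e) E = of_int e * sqrt (E\<^sup>2 - 2 * real n)"
  unfolding xi_def by simp

lemma phi_overlap_opposite:
  assumes "n \<ge> 1" and "E > sqrt (2 * real n)" and "e \<in> {1, -1}"
  shows "phi_overlap (n, e) (n, -e) E = of_real (sqrt (2 * real n) / E)"
proof -
  define k where "k = sqrt (E\<^sup>2 - 2 * real n)"
  have "(sqrt (2 * real n))\<^sup>2 < E\<^sup>2"
    using assms(2) by (intro power_strict_mono) auto
  then have E2: "E\<^sup>2 > 2 * real n" by simp
  have E: "E > 0" using assms(2) real_sqrt_ge_zero[of "2 * real n"] by linarith
  have "k < sqrt (E\<^sup>2)" unfolding k_def using assms(1) by (intro real_sqrt_less_mono) simp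
  then have "k < E" using E by simp
  have "k \<ge> 0" unfolding k_def using E2 by simp
  define a b where "a = E - of_int e * k" and "b = E + of_int e * k"
  have ab: "a > 0" "b > 0"
    using \<open>k < E\<close> \<open>k \<ge> 0\<close> assms(3) unfolding a_def b_def by auto
  have "a * b = E\<^sup>2 - k\<^sup>2"
    using assms(3) unfolding a_def b_def by (auto simp: algebra_simps power2_eq_square)
  then have prod: "a * b = 2 * real n" unfolding k_def using E2 by simp
  have xa: "E - xi (n, e) E = a" and xb: "E - xi (n, -e) E = b"
    unfolding xi_branch[OF assms(1)] a_def b_def k_def by simp_all
  define ca cb where "ca = (2 * real n + a\<^sup>2) powr (-1/2)" and "cb = (2 * real n + b\<^sup>2) powr (-1/2)"
  have "phi_upper (n, e) E * phi_upper (n, -e) E + phi_lower (n, e) E * phi_lower (n, -e) E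
      = ca * cb * (2 * real n + a * b)"
    using assms(1)
    unfolding phi_upper_def phi_lower_def fst_conv xa xb power2_abs
      ca_def[symmetric] cb_def[symmetric]
    by (simp add: algebra_simps)
  also have "\<dots> = sqrt (2 * real n) / E"
    unfolding ca_def cb_def prod[symmetric] powr_minus_half_overlap_identity[OF ab]
    by (simp add: a_def b_def)
  finally show ?thesis unfolding phi_overlap_eq by simp
qed

text \<open>No integrability of \<open>V\<^sub>0\<close> is needed: otherwise both
  sides vanish, the Bochner integral of a non-integrable function being \<open>0\<close>.\<close>
lemma S_lin_scalar_pot:
  "S_lin (scalar_pot V0) E m p =
     \<i> * complex_of_real E / complex_of_real (sqrt (E\<^sup>2 - 2 * real (fst p)))
     * (fourier V0 (xi m E - xi p E) * phi_overlap m p E)"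
proof -
  let ?e = "\<lambda>x. exp (- \<i> * complex_of_real ((xi m E - xi p E) * x))"
  have "(LINT x|lborel. LINT y|lborel. ?e x * cdot2 (phi m E y) (scalar_pot V0 x y *v phi p E y))
      = (LINT x|lborel. (complex_of_real (V0 x) * ?e x) * phi_overlap m p E)"
    unfolding scalar_pot_def cdot2_mat_scalar phi_overlap_def
    by (rule Bochner_Integration.integral_cong[OF refl]) (simp add: mult_ac)
  also have "\<dots> = fourier V0 (xi m E - xi p E) * phi_overlap m p E"
    unfolding fourier_def by (rule integral_mult_left_zero)
  finally show ?thesis unfolding S_lin_def by simp
qed

lemma S_lin_scalar_pot_eq_0: "fst m \<noteq> fst p \<Longrightarrow> S_lin (scalar_pot V0) E m p = 0"
  by (simp add: S_lin_scalar_pot phi_overlap_eq_0)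

lemma S_lin_scalar_pot_diagonal:
  "S_lin (scalar_pot V0) E m m
     = \<i> * complex_of_real E / complex_of_real (sqrt (E\<^sup>2 - 2 * real (fst m))) * fourier V0 0"
  by (simp add: S_lin_scalar_pot phi_overlap_self)

lemma xi_opposite_diff:
  "n \<ge> 1 \<Longrightarrow> xi (n, e) E - xi (n, -e) E = 2 * of_int e * sqrt (E\<^sup>2 - 2 * real n)"
  by (simp add: xi_branch)

lemma S_lin_scalar_pot_reflection:
  assumes "n \<ge> 1" and "E > sqrt (2 * real n)" and "e \<in> {1, -1}"
  shows "S_lin (scalar_pot V0) E (n, e) (n, -e)
           = \<i> * complex_of_real (sqrt (2 * real n)) / complex_of_real (sqrt (E\<^sup>2 - 2 * real n))
             * fourier V0 (2 * of_int e * sqrt (E\<^sup>2 - 2 * real n))"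
proof -
  have "E > 0" using assms(2) real_sqrt_ge_zero[of "2 * real n"] by linarith
  then show ?thesis
    unfolding S_lin_scalar_pot xi_opposite_diff[OF assms(1)] phi_overlap_opposite[OF assms]
    by (simp add: field_simps)
qed

lemma S_lin_scalar_pot_reflection_plus_minus:
  assumes "n \<ge> 1" and "E > sqrt (2 * real n)"
  shows "S_lin (scalar_pot V0) E (n, 1) (n, -1)
           = \<i> * complex_of_real (sqrt (2 * real n)) / complex_of_real (sqrt (E\<^sup>2 - 2 * real n))
             * fourier V0 (2 * sqrt (E\<^sup>2 - 2 * real n))"
    and "S_lin (scalar_pot V0) E (n, -1) (n, 1)
           = \<i> * complex_of_real (sqrt (2 * real n)) / complex_of_real (sqrt (E\<^sup>2 - 2 * real n))
             * fourier V0 (- 2 * sqrt (E\<^sup>2 - 2 * real n))"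
  using S_lin_scalar_pot_reflection[OF assms, of 1] S_lin_scalar_pot_reflection[OF assms, of "-1"]
  by simp_all

lemma fourier_eq_if_S_lin_reflection_eq:
  assumes "n \<ge> 1" and "\<xi> \<noteq> 0"
    and "\<And>F. F > sqrt (2 * real n) \<Longrightarrow>
           S_lin (scalar_pot W0) F (n, 1) (n, -1) = S_lin (scalar_pot V0) F (n, 1) (n, -1)
         \<and> S_lin (scalar_pot W0) F (n, -1) (n, 1) = S_lin (scalar_pot V0) F (n, -1) (n, 1)"
  shows "fourier W0 \<xi> = fourier V0 \<xi>"
proof -
  define e :: int where "e = (if \<xi> > 0 then 1 else -1)"
  define F where "F = sqrt ((\<xi> / 2)\<^sup>2 + 2 * real n)"
  have e: "e \<in> {1, -1}" unfolding e_def by auto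
  have F: "F > sqrt (2 * real n)"
    unfolding F_def using assms(2) by (intro real_sqrt_less_mono) simp
  have k: "sqrt (F\<^sup>2 - 2 * real n) = \<bar>\<xi>\<bar> / 2"
    unfolding F_def by (simp add: add_nonneg_nonneg real_sqrt_abs flip: abs_divide)
  have \<xi>: "2 * of_int e * sqrt (F\<^sup>2 - 2 * real n) = \<xi>"
    unfolding k e_def by auto
  have "S_lin (scalar_pot W0) F (n, e) (n, -e) = S_lin (scalar_pot V0) F (n, e) (n, -e)"
    using assms(3)[OF F] unfolding e_def by auto
  moreover have "sqrt (F\<^sup>2 - 2 * real n) \<noteq> 0" using assms(2) unfolding k by simp
  ultimately show ?thesis
    using assms(1) unfolding S_lin_scalar_pot_reflection[OF assms(1) F e] \<xi> by simp
qed

lemma modes_same_level_opposite: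
  assumes "m \<in> modes" and "p \<in> modes" and "fst m = fst p" and "snd m \<noteq> snd p"
  shows "snd m \<in> {1, -1}" and "fst m \<ge> 1" and "p = (fst m, - snd m)"
  using assms unfolding modes_def by auto

theorem mainTheorem6:
  fixes V0 :: "real \<Rightarrow> real" and E :: real and m p :: mode
  assumes "admissible V0"
    and "m \<in> modes_E E" and "p \<in> modes_E E"
  shows
    "(fst m \<noteq> fst p \<longrightarrow> S_lin (scalar_pot V0) E m p = 0)
     \<and> S_lin (scalar_pot V0) E m m
         = \<i> * complex_of_real E / complex_of_real (sqrt (E\<^sup>2 - 2 * real (fst m))) * fourier V0 0
     \<and> (fst m = fst p \<and> fst m \<ge> 1 \<and> E > sqrt (2 * real (fst m)) \<and> snd m \<noteq> snd p \<longrightarrow>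
          (let n = fst m; k = sqrt (E\<^sup>2 - 2 * real n) in
            (LINT y|lborel. cdot2 (phi m E y) (phi p E y)) = complex_of_real (sqrt (2 * real n) / E)
          \<and> sqrt (2 * real n) / E \<noteq> 0
          \<and> (xi m E - xi p E = 2 * k \<or> xi m E - xi p E = - 2 * k)
          \<and> S_lin (scalar_pot V0) E (n, 1) (n, -1)
              = \<i> * complex_of_real (sqrt (2 * real n)) / complex_of_real k * fourier V0 (2 * k)
          \<and> S_lin (scalar_pot V0) E (n, -1) (n, 1)
              = \<i> * complex_of_real (sqrt (2 * real n)) / complex_of_real k * fourier V0 (- 2 * k)))
     \<and> (\<forall>W0. admissible W0 \<and> fourier W0 0 = fourier V0 0 \<longrightarrow>
          (\<forall>F. \<forall>m' \<in> modes_E F. S_lin (scalar_pot W0) F m' m' = S_lin (scalar_pot V0) F m' m'))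
     \<and> (\<forall>n::nat. \<forall>W0. n \<ge> 1 \<and> admissible W0 \<and>
          (\<forall>F. F > sqrt (2 * real n) \<longrightarrow>
             S_lin (scalar_pot W0) F (n, 1) (n, -1) = S_lin (scalar_pot V0) F (n, 1) (n, -1)
           \<and> S_lin (scalar_pot W0) F (n, -1) (n, 1) = S_lin (scalar_pot V0) F (n, -1) (n, 1))
          \<longrightarrow> (\<forall>\<xi>. \<xi> \<noteq> 0 \<longrightarrow> fourier W0 \<xi> = fourier V0 \<xi>))"
proof -
  show ?thesis
    (is "?different \<and> ?diagonal \<and> (?opposite \<longrightarrow> ?reflection) \<and> ?transmission \<and> ?determination")
  proof (intro conjI)
    show ?different ?diagonal ?transmission
      by (simp_all add: S_lin_scalar_pot_eq_0 S_lin_scalar_pot_diagonal)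
    show ?determination
      using fourier_eq_if_S_lin_reflection_eq by blast
    show "?opposite \<longrightarrow> ?reflection"
    proof
      assume ?opposite
      then obtain n e where mp: "m = (n, e)" "p = (n, -e)"
        and level: "n \<ge> 1" "E > sqrt (2 * real n)" "e \<in> {1, -1}"
        using modes_same_level_opposite assms(2,3) unfolding modes_E_def
        by (metis mem_Collect_eq prod.collapse)
      show ?reflection
        unfolding Let_def mp fst_conv phi_overlap_def[symmetric]
        using phi_overlap_opposite[OF level] xi_opposite_diff[OF level(1), of e E]
          S_lin_scalar_pot_reflection_plus_minus[OF level(1,2)] level
        by auto
    qed
  qed
qed

end
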